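(* Let $PS = D \cup LP \cup MP \cup IC$ be a minimal P2P system such that no negation occurs in $LP$. Then the relation $\sqsupseteq_{Min}$ is a partial order on the set of weak models of $PS$.
   Context: Peer atoms: a peer identifier is a positive integer; a peer atom is $i\!:\!p(t_1,\dots,t_k)$ with $i$ a peer identifier, $p$ a predicate and $t_j$ terms; $i\!:\!p$ is a peer predicate. A literal is an atom $A$ or its negation-as-failure $not\ A$. Built-in atoms are $X\,\theta\,Y$ with $\theta\in\{<,>,\le,\ge,=,\neq\}$. Rules (all safe): a standard rule $H\leftarrow \mathcal B$; an integrity constraint $\leftarrow \mathcal B$; a maximal mapping rule $i\!:\!h(X) \leftharpoonup j\!:\!(p_1(X_1),\dots,p_m(X_m),\varphi)$ with $i\neq j$; a minimal mapping rule, identical but with $\leftharpoondown$. A peer $P_i=\langle D_i,LP_i,MP_i,IC_i\rangle$ consists of a finite set $D_i$ of ground atoms with identifier $i$, a finite set $LP_i$ of standard rules all of whose atoms have identifier $i$, a finite set $MP_i$ of mapping rules with head identifier $i$, and a finite set $IC_i$ of integrity constraints over atoms with identifier $i$. A P2P system is a set $PS=\{P_1,\dots,P_n\}$ of peers in which every source identifier of a mapping rule lies in $[1..n]$; $D,LP,MP,IC$ are the unions of the components, and $PS$ is identified with $D\cup LP\cup MP\cup IC$. A minimal P2P system is one all of whose mapping rules are minimal. A predicate is derived if it heads a standard rule, a mapping predicate if it heads a mapping rule, base otherwise; each predicate has exactly one type and each mapping predicate heads exactly one mapping rule. Semantics: interpretation = set of ground peer atoms; $A$ true iff $A\in M$,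 $not\ A$ true iff $A\notin M$; a standard rule is satisfied iff its body is false or its head true; a constraint iff its body is false. $MM(\Pi)$ = inclusion-minimal models. $St(r)$ turns a mapping rule with head $H$, body $\mathcal B$ into $H\leftarrow\mathcal B$. $M$ is a weak model of $PS$ if $\{M\}=MM(St(PS^M))$, where $PS^M$ is obtained from $ground(PS)$ by removing every rule whose body contains $not\ A$ with $A\in M$, deleting negative literals from the remaining rules, and removing every ground mapping rule whose head is not in $M$. $M[MP]$ = atoms of $M$ with a mapping predicate. For weak models $M,N$: $M\sqsupseteq_{Min}N$ iff $M[MP]\subseteq N[MP]$. *)

theory Defs
  imports Main
begin

text \<open>Terms: variables or constants (constants of a linearly ordered type, so that
  built-in comparisons make sense).\<close>
datatype 'c trm = Var string | Cst 'c

datatype cmp = CLt | CGt | CLe | CGe | CEq | CNeq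

text \<open>Atoms, parametric in the type 't of arguments ('c trm for non-ground,
  'c for ground): a peer atom i:p(t1,...,tk) or a built-in atom X theta Y.\<close>
datatype ('p, 't) atom = PAtom nat 'p "'t list" | BAtom 't cmp 't

datatype 'a lit = Pos 'a | Neg 'a

datatype mkind = MaxMap | MinMap

text \<open>StdRule (i,h,args) body           : standard rule  i:h(args) <- body
  ICRule body                       : integrity constraint  <- body
  MapRule k (i,h,args) j ps phi     : mapping rule  i:h(args) <-(k) j:(p1(X1),...,pm(Xm), phi),
                                      ps = [(p1,X1),...], phi = list (conjunction) of built-ins.\<close>
datatype ('p, 't) rule =
    StdRule "nat \<times> 'p \<times> 't list" "('p, 't) atom lit list"
  | ICRule "('p, 't) atom lit list"
  | MapRule mkind "nat \<times> 'p \<times> 't list" nat "('p \<times> 't list) list" "('t \<times> cmp \<times> 't) list"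

type_synonym ('p, 'c) gpatom = "nat \<times> 'p \<times> 'c list"
type_synonym ('p, 'c) interp = "('p, 'c) gpatom set"

record ('p, 'c) peer =
  pD  :: "('p, 'c) gpatom set"
  pLP :: "('p, 'c trm) rule set"
  pMP :: "('p, 'c trm) rule set"
  pIC :: "('p, 'c trm) rule set"

text \<open>A P2P system {P1,...,Pn} is a list of peers; peer i (1 \<le> i \<le> n) is PS ! (i-1).\<close>
type_synonym ('p, 'c) p2p = "('p, 'c) peer list"

definition peerD :: "('p, 'c) p2p \<Rightarrow> ('p, 'c) gpatom set" where
  "peerD PS = (\<Union>P\<in>set PS. pD P)"
definition peerLP :: "('p, 'c) p2p \<Rightarrow> ('p, 'c trm) rule set" where
  "peerLP PS = (\<Union>P\<in>set PS. pLP P)"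
definition peerMP :: "('p, 'c) p2p \<Rightarrow> ('p, 'c trm) rule set" where
  "peerMP PS = (\<Union>P\<in>set PS. pMP P)"
definition peerIC :: "('p, 'c) p2p \<Rightarrow> ('p, 'c trm) rule set" where
  "peerIC PS = (\<Union>P\<in>set PS. pIC P)"

fun atom_peer_ok :: "nat \<Rightarrow> ('p, 't) atom \<Rightarrow> bool" where
  "atom_peer_ok i (PAtom j _ _) = (j = i)"
| "atom_peer_ok i (BAtom _ _ _) = True"

fun lit_atom :: "'a lit \<Rightarrow> 'a" where
  "lit_atom (Pos a) = a" | "lit_atom (Neg a) = a"

fun is_neg :: "'a lit \<Rightarrow> bool" where
  "is_neg (Pos _) = False" | "is_neg (Neg _) = True"

fun tvars :: "'c trm \<Rightarrow> string set" where
  "tvars (Var x) = {x}" | "tvars (Cst _) = {}"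

definition tsvars :: "'c trm list \<Rightarrow> string set" where
  "tsvars ts = (\<Union>t\<in>set ts. tvars t)"

fun avars :: "('p, 'c trm) atom \<Rightarrow> string set" where
  "avars (PAtom _ _ ts) = tsvars ts"
| "avars (BAtom x _ y) = tvars x \<union> tvars y"

fun is_peer_atom :: "('p, 't) atom \<Rightarrow> bool" where
  "is_peer_atom (PAtom _ _ _) = True" | "is_peer_atom (BAtom _ _ _) = False"

definition posvars :: "('p, 'c trm) atom lit list \<Rightarrow> string set" where
  "posvars B = (\<Union>l\<in>set B. case l of Pos a \<Rightarrow> (if is_peer_atom a then avars a else {}) | Neg _ \<Rightarrow> {})"

definition body_vars :: "('p, 'c trm) atom lit list \<Rightarrow> string set" where
  "body_vars B = (\<Union>l\<in>set B. avars (lit_atom l))"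

fun safe :: "('p, 'c trm) rule \<Rightarrow> bool" where
  "safe (StdRule (i, h, ts) B) = (tsvars ts \<union> body_vars B \<subseteq> posvars B)"
| "safe (ICRule B) = (body_vars B \<subseteq> posvars B)"
| "safe (MapRule k (i, h, ts) j ps phi) =
     (tsvars ts \<union> (\<Union>(x, _, y)\<in>set phi. tvars x \<union> tvars y) \<subseteq> (\<Union>(_, xs)\<in>set ps. tsvars xs))"

fun head_pred :: "('p, 't) rule \<Rightarrow> (nat \<times> 'p) option" where
  "head_pred (StdRule (i, h, _) _) = Some (i, h)"
| "head_pred (ICRule _) = None"
| "head_pred (MapRule _ (i, h, _) _ _ _) = Some (i, h)"

fun is_std :: "('p, 't) rule \<Rightarrow> bool" where
  "is_std (StdRule _ _) = True" | "is_std _ = False"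
fun is_ic :: "('p, 't) rule \<Rightarrow> bool" where
  "is_ic (ICRule _) = True" | "is_ic _ = False"
fun is_map :: "('p, 't) rule \<Rightarrow> bool" where
  "is_map (MapRule _ _ _ _ _) = True" | "is_map _ = False"

definition derived_preds :: "('p, 'c) p2p \<Rightarrow> (nat \<times> 'p) set" where
  "derived_preds PS = {q. \<exists>r\<in>peerLP PS. head_pred r = Some q}"
definition mapping_preds :: "('p, 'c) p2p \<Rightarrow> (nat \<times> 'p) set" where
  "mapping_preds PS = {q. \<exists>r\<in>peerMP PS. head_pred r = Some q}"

definition wf_peer :: "nat \<Rightarrow> nat \<Rightarrow> ('p, 'c) peer \<Rightarrow> bool" where
  "wf_peer n i P \<longleftrightarrow>
     finite (pD P) \<and> finite (pLP P) \<and> finite (pMP P) \<and> finite (pIC P)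
   \<and> (\<forall>(j, _, _)\<in>pD P. j = i)
   \<and> (\<forall>r\<in>pLP P. case r of StdRule (j, _, _) B \<Rightarrow> j = i \<and> (\<forall>l\<in>set B. atom_peer_ok i (lit_atom l))
                          | _ \<Rightarrow> False)
   \<and> (\<forall>r\<in>pMP P. case r of MapRule _ (j, _, _) s _ _ \<Rightarrow> j = i \<and> s \<noteq> i \<and> 1 \<le> s \<and> s \<le> n
                          | _ \<Rightarrow> False)
   \<and> (\<forall>r\<in>pIC P. case r of ICRule B \<Rightarrow> (\<forall>l\<in>set B. atom_peer_ok i (lit_atom l))
                          | _ \<Rightarrow> False)
   \<and> (\<forall>r\<in>pLP P \<union> pMP P \<union> pIC P. safe r)"

definition p2p_system :: "('p, 'c) p2p \<Rightarrow> bool" where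
  "p2p_system PS \<longleftrightarrow>
     (\<forall>k<length PS. wf_peer (length PS) (Suc k) (PS ! k))
   \<and> derived_preds PS \<inter> mapping_preds PS = {}
   \<and> (\<forall>r1\<in>peerMP PS. \<forall>r2\<in>peerMP PS. head_pred r1 = head_pred r2 \<longrightarrow> r1 = r2)"

definition minimal_p2p :: "('p, 'c) p2p \<Rightarrow> bool" where
  "minimal_p2p PS \<longleftrightarrow> (\<forall>r\<in>peerMP PS. \<exists>h j ps phi. r = MapRule MinMap h j ps phi)"

definition negation_free_LP :: "('p, 'c) p2p \<Rightarrow> bool" where
  "negation_free_LP PS \<longleftrightarrow> (\<forall>r\<in>peerLP PS. \<forall>h B. r = StdRule h B \<longrightarrow> (\<forall>l\<in>set B. \<not> is_neg l))"

fun inst :: "(string \<Rightarrow> 'c) \<Rightarrow> 'c trm \<Rightarrow> 'c" where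
  "inst \<sigma> (Var x) = \<sigma> x" | "inst \<sigma> (Cst c) = c"

fun eval_cmp :: "cmp \<Rightarrow> 'c::linorder \<Rightarrow> 'c \<Rightarrow> bool" where
  "eval_cmp CLt x y = (x < y)"
| "eval_cmp CGt x y = (x > y)"
| "eval_cmp CLe x y = (x \<le> y)"
| "eval_cmp CGe x y = (x \<ge> y)"
| "eval_cmp CEq x y = (x = y)"
| "eval_cmp CNeq x y = (x \<noteq> y)"

fun holds :: "('p, 'c::linorder) interp \<Rightarrow> ('p, 'c) atom \<Rightarrow> bool" where
  "holds M (PAtom i p cs) = ((i, p, cs) \<in> M)"
| "holds M (BAtom x th y) = eval_cmp th x y"

fun lit_true :: "('p, 'c::linorder) interp \<Rightarrow> ('p, 'c) atom lit \<Rightarrow> bool" where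
  "lit_true M (Pos a) = holds M a"
| "lit_true M (Neg a) = (\<not> holds M a)"

definition body_true :: "('p, 'c::linorder) interp \<Rightarrow> ('p, 'c) atom lit list \<Rightarrow> bool" where
  "body_true M B \<longleftrightarrow> (\<forall>l\<in>set B. lit_true M l)"

fun St :: "('p, 't) rule \<Rightarrow> ('p, 't) rule" where
  "St (MapRule _ h j ps phi) =
     StdRule h (map (\<lambda>(p, xs). Pos (PAtom j p xs)) ps @ map (\<lambda>(x, th, y). Pos (BAtom x th y)) phi)"
| "St r = r"

fun sat_rule :: "('p, 'c::linorder) interp \<Rightarrow> ('p, 'c) rule \<Rightarrow> bool" where
  "sat_rule M (StdRule h B) = (body_true M B \<longrightarrow> h \<in> M)"
| "sat_rule M (ICRule B) = (\<not> body_true M B)"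
| "sat_rule M (MapRule k h j ps phi) =
     (body_true M (map (\<lambda>(p, xs). Pos (PAtom j p xs)) ps @ map (\<lambda>(x, th, y). Pos (BAtom x th y)) phi)
      \<longrightarrow> h \<in> M)"

definition is_model :: "('p, 'c::linorder) interp \<Rightarrow> ('p, 'c) rule set \<Rightarrow> bool" where
  "is_model M \<Pi> \<longleftrightarrow> (\<forall>r\<in>\<Pi>. sat_rule M r)"

definition MM :: "('p, 'c::linorder) rule set \<Rightarrow> ('p, 'c) interp set" where
  "MM \<Pi> = {M. is_model M \<Pi> \<and> (\<forall>N. is_model N \<Pi> \<and> N \<subseteq> M \<longrightarrow> N = M)}"

definition ground :: "('p, 'c) p2p \<Rightarrow> ('p, 'c) rule set" where
  "ground PS =
     (\<lambda>a. StdRule a []) ` peerD PS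
   \<union> (\<Union>\<sigma>. map_rule id (inst \<sigma>) ` (peerLP PS \<union> peerMP PS \<union> peerIC PS))"

definition pos_part :: "('p, 'c) atom lit list \<Rightarrow> ('p, 'c) atom lit list" where
  "pos_part B = filter (\<lambda>l. \<not> is_neg l) B"

definition neg_blocked :: "('p, 'c::linorder) interp \<Rightarrow> ('p, 'c) atom lit list \<Rightarrow> bool" where
  "neg_blocked M B \<longleftrightarrow> (\<exists>a. Neg a \<in> set B \<and> holds M a)"

definition reduct :: "('p, 'c::linorder) p2p \<Rightarrow> ('p, 'c) interp \<Rightarrow> ('p, 'c) rule set" where
  "reduct PS M =
     {StdRule h (pos_part B) | h B. StdRule h B \<in> ground PS \<and> \<not> neg_blocked M B}
   \<union> {ICRule (pos_part B) | B. ICRule B \<in> ground PS \<and> \<not> neg_blocked M B}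
   \<union> {MapRule k h j ps phi | k h j ps phi. MapRule k h j ps phi \<in> ground PS \<and> h \<in> M}"

definition weak_model :: "('p, 'c::linorder) p2p \<Rightarrow> ('p, 'c) interp \<Rightarrow> bool" where
  "weak_model PS M \<longleftrightarrow> MM (St ` reduct PS M) = {M}"

definition weak_models :: "('p, 'c::linorder) p2p \<Rightarrow> ('p, 'c) interp set" where
  "weak_models PS = {M. weak_model PS M}"

definition restrict_MP :: "('p, 'c) p2p \<Rightarrow> ('p, 'c) interp \<Rightarrow> ('p, 'c) interp" where
  "restrict_MP PS M = {(i, p, cs) \<in> M. (i, p) \<in> mapping_preds PS}"

text \<open>The preference relation: (M, N) in the relation iff M \<sqsupseteq>_Min N, i.e. M[MP] \<subseteq> N[MP],
  on weak models.\<close>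
definition pref_Min :: "('p, 'c::linorder) p2p \<Rightarrow> (('p, 'c) interp \<times> ('p, 'c) interp) set" where
  "pref_Min PS = {(M, N). M \<in> weak_models PS \<and> N \<in> weak_models PS
                          \<and> restrict_MP PS M \<subseteq> restrict_MP PS N}"

end

theory Submission
  imports Defs
begin

text \<open>Reflexivity and transitivity are inherited from set inclusion; the content is
  antisymmetry. For weak models M and N with M[MP] \<subseteq> N[MP], every standard rule of
  St(PS^M) also belongs to St(PS^N): the local rules are negation-free, so their part of
  the reduct does not depend on the model, and a mapping rule kept in PS^M has its head in
  M[MP] \<subseteq> N. Since all rule bodies of St(PS^M) are positive, M \<inter> N is then a model
  of St(PS^M), and minimality of M gives M \<subseteq> N.\<close>

definition positive_body :: "'a lit list \<Rightarrow> bool" where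
  "positive_body B \<longleftrightarrow> (\<forall>l\<in>set B. \<not> is_neg l)"

fun positive_rule :: "('p, 't) rule \<Rightarrow> bool" where
  "positive_rule (StdRule _ B) = positive_body B"
| "positive_rule (ICRule B) = positive_body B"
| "positive_rule (MapRule _ _ _ _ _) = False"

lemma positive_body_pos_part: "positive_body (pos_part B)"
  unfolding positive_body_def pos_part_def by simp

lemma positive_body_not_neg_blocked: "positive_body B \<Longrightarrow> \<not> neg_blocked M B"
  unfolding positive_body_def neg_blocked_def by force

lemma body_true_mono:
  assumes "M \<subseteq> N" "positive_body B" "body_true M B"
  shows "body_true N B"
  unfolding body_true_def
proof
  fix l assume l: "l \<in> set B"
  with assms(2) have "\<not> is_neg l" unfolding positive_body_def by blast
  then obtain a where a: "l = Pos a" by (cases l) auto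
  have "holds M a" using assms(3) l a unfolding body_true_def by auto
  with assms(1) have "holds N a" by (cases a) auto
  then show "lit_true N l" using a by simp
qed

lemma sat_rule_Int:
  assumes "positive_rule r" "sat_rule M r" "is_std r \<Longrightarrow> sat_rule N r"
  shows "sat_rule (M \<inter> N) r"
  using assms
proof (cases r)
  case (StdRule h B)
  then show ?thesis
    using assms body_true_mono[of "M \<inter> N" M B] body_true_mono[of "M \<inter> N" N B] by auto
next
  case (ICRule B)
  then show ?thesis using assms body_true_mono[of "M \<inter> N" M B] by auto
qed simp

lemma p2p_system_wf_peer:
  assumes "p2p_system PS" "P \<in> set PS"
  shows "\<exists>i. wf_peer (length PS) i P"
  using assms unfolding p2p_system_def by (metis in_set_conv_nth)

lemma p2p_system_rule_kinds:
  assumes "p2p_system PS"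
  shows "r \<in> peerLP PS \<Longrightarrow> is_std r" "r \<in> peerMP PS \<Longrightarrow> is_map r" "r \<in> peerIC PS \<Longrightarrow> is_ic r"
  by (cases r; fastforce simp: peerLP_def peerMP_def peerIC_def wf_peer_def
                        dest!: p2p_system_wf_peer[OF assms])+

lemma ground_StdRule_positive:
  assumes "p2p_system PS" "negation_free_LP PS" "StdRule h B \<in> ground PS"
  shows "positive_body B"
proof -
  from assms(3) consider "B = []"
    | \<sigma> r where "r \<in> peerLP PS \<union> peerMP PS \<union> peerIC PS" "StdRule h B = map_rule id (inst \<sigma>) r"
    unfolding ground_def by blast
  then show ?thesis
  proof cases
    case 1
    then show ?thesis unfolding positive_body_def by simp
  next
    case (2 \<sigma> r)
    then obtain h' B' where r: "r = StdRule h' B'" by (cases r) auto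
    with 2 p2p_system_rule_kinds[OF assms(1)] have "r \<in> peerLP PS" by fastforce
    with assms(2) r have "positive_body B'"
      unfolding negation_free_LP_def positive_body_def by blast
    moreover have "B = map (map_lit (map_atom id (inst \<sigma>))) B'" using 2 r by simp
    ultimately show ?thesis unfolding positive_body_def by (auto elim!: is_neg.elims)
  qed
qed

lemma ground_MapRule_head_mapping_pred:
  assumes "p2p_system PS" "MapRule k (i, p, cs) j ps phi \<in> ground PS"
  shows "(i, p) \<in> mapping_preds PS"
proof -
  from assms(2) obtain \<sigma> r where R: "r \<in> peerLP PS \<union> peerMP PS \<union> peerIC PS"
      "MapRule k (i, p, cs) j ps phi = map_rule id (inst \<sigma>) r"
    unfolding ground_def by blast
  then obtain k' i' p' ts j' ps' phi' where r: "r = MapRule k' (i', p', ts) j' ps' phi'"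
    by (cases r) auto
  with R p2p_system_rule_kinds[OF assms(1)] have "r \<in> peerMP PS" by fastforce
  moreover have "head_pred r = Some (i, p)" using R r by simp
  ultimately show ?thesis unfolding mapping_preds_def by blast
qed

lemma St_reduct_cases:
  assumes "r \<in> St ` reduct PS M"
  obtains (Std) h B where "r = StdRule h (pos_part B)" "StdRule h B \<in> ground PS"
      "\<not> neg_blocked M B"
  | (IC) B where "r = ICRule (pos_part B)"
  | (Map) k h j ps phi where "r = St (MapRule k h j ps phi)" "MapRule k h j ps phi \<in> ground PS"
      "h \<in> M"
  using assms unfolding reduct_def by fastforce

lemma St_reduct_positive:
  assumes "r \<in> St ` reduct PS M"
  shows "positive_rule r"
  using assms
proof (cases rule: St_reduct_cases)
  case (Map k h j ps phi)
  then show ?thesis by (auto simp: positive_body_def)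
qed (simp_all add: positive_body_pos_part)

lemma St_reduct_std_mono:
  assumes "p2p_system PS" "negation_free_LP PS"
    and MP: "restrict_MP PS M \<subseteq> restrict_MP PS N"
    and r: "r \<in> St ` reduct PS M" "is_std r"
  shows "r \<in> St ` reduct PS N"
  using r(1)
proof (cases rule: St_reduct_cases)
  case (Std h B)
  then have "\<not> neg_blocked N B"
    using ground_StdRule_positive[OF assms(1,2)] positive_body_not_neg_blocked by blast
  with Std have "StdRule h (pos_part B) \<in> reduct PS N" unfolding reduct_def by blast
  with Std show ?thesis by force
next
  case IC
  with r(2) show ?thesis by simp
next
  case (Map k h j ps phi)
  obtain i p cs where h: "h = (i, p, cs)" by (cases h)
  with Map ground_MapRule_head_mapping_pred[OF assms(1)] have "h \<in> restrict_MP PS M"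
    unfolding restrict_MP_def by blast
  with MP have "h \<in> N" unfolding restrict_MP_def by blast
  with Map have "MapRule k h j ps phi \<in> reduct PS N" unfolding reduct_def by blast
  with Map show ?thesis by blast
qed

lemma weak_model_subset_if_restrict_MP_subset:
  assumes "p2p_system PS" "negation_free_LP PS"
    and M: "weak_model PS M" and N: "weak_model PS N"
    and MP: "restrict_MP PS M \<subseteq> restrict_MP PS N"
  shows "M \<subseteq> N"
proof -
  have minM: "M \<in> MM (St ` reduct PS M)" and minN: "N \<in> MM (St ` reduct PS N)"
    using M N unfolding weak_model_def by simp_all
  have "is_model (M \<inter> N) (St ` reduct PS M)"
    unfolding is_model_def
  proof
    fix r assume r: "r \<in> St ` reduct PS M"
    show "sat_rule (M \<inter> N) r"
    proof (rule sat_rule_Int)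
      show "positive_rule r" using St_reduct_positive[OF r] .
      show "sat_rule M r" using minM r unfolding MM_def is_model_def by blast
      show "sat_rule N r" if "is_std r"
        using minN St_reduct_std_mono[OF assms(1,2) MP r that] unfolding MM_def is_model_def by blast
    qed
  qed
  with minM have "M \<inter> N = M" unfolding MM_def by blast
  then show ?thesis by blast
qed

theorem proposition3:
  fixes PS :: "('p, 'c::linorder) p2p"
  assumes "p2p_system PS"
    and "minimal_p2p PS"
    and "negation_free_LP PS"
  shows "partial_order_on (weak_models PS) (pref_Min PS)"
  unfolding partial_order_on_def preorder_on_def
proof (intro conjI)
  show "pref_Min PS \<subseteq> weak_models PS \<times> weak_models PS"
    unfolding pref_Min_def by auto
  show "refl_on (weak_models PS) (pref_Min PS)"
    unfolding refl_on_def pref_Min_def by auto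
  show "trans (pref_Min PS)"
    unfolding trans_def pref_Min_def by auto
  show "antisym (pref_Min PS)"
    unfolding antisym_def pref_Min_def weak_models_def
    using weak_model_subset_if_restrict_MP_subset[OF assms(1,3)] by blast
qed

end
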